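(* Let $n\ge 2$. For $T\in\mathrm{SYT}^{+k}((b,b))$ with $b\ge1$, $k\ge0$, $2b+k=n$, define the word $\alpha(T)$ as follows. The largest entry $n$ lies in the bottom-right cell; delete it. For $j=1,\dots,b$ let $A_j$ be the set in the top cell of column $j$ and $B_j$ the set in the bottom cell of column $j$ (with $n$ removed when $j=b$; $B_b$ may become empty). Then $\alpha(T)$ is the concatenation, for $j=1,\dots,b$ in order, of: the elements of $A_j\setminus\{\max A_j\}$ in increasing order, followed by the elements of $B_j$ in increasing order, followed by $\max A_j$. Then: (1) $\alpha$ is a bijection from $\bigsqcup_{b\ge1,k\ge0,\,2b+k=n}\mathrm{SYT}^{+k}((b,b))$ onto the set of $321$-avoiding permutations of $[n-1]$; (2) the set of entries in the top row of $T$ equals the set of values of the right-to-left minima of $\alpha(T)$; (3) if $T$ has $b$ columns, then $\alpha(T)$ has exactly $b-1$ inner valleys.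
   Context: $\mathrm{SYT}^{+k}(\lambda)$: for a partition $\lambda$ of $N$ and $k\ge 0$, the set of fillings $S$ of the cells of the Ferrers diagram of $\lambda$ by nonempty sets of positive integers forming a set partition of $[N+k]$, such that $\max S(u)<\min S(v)$ whenever $u\ne v$ and $u$ is weakly northwest of $v$. A permutation $\pi=\pi_1\cdots\pi_m$ is $321$-avoiding if there are no $i<j<l$ with $\pi_i>\pi_j>\pi_l$. $\pi_i$ is a right-to-left minimum if $\pi_i<\pi_j$ for all $j>i$. An inner valley of $\pi$ is an entry $\pi_j$ with $1<j<m$ and $\pi_{j-1}>\pi_j<\pi_{j+1}$. *)

theory Defs
  imports Main
begin

text \<open>A partition is a list of row lengths (top row first). Cells are pairs (row, column),
  0-indexed, row 0 being the top row (English convention).\<close>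

definition cells :: "nat list \<Rightarrow> (nat \<times> nat) set" where
  "cells lam = {(i, j). i < length lam \<and> j < lam ! i}"

definition SYT_plus :: "nat list \<Rightarrow> nat \<Rightarrow> (nat \<Rightarrow> nat \<Rightarrow> nat set) set" where
  "SYT_plus lam k = {S.
     (\<forall>i j. (i, j) \<notin> cells lam \<longrightarrow> S i j = {}) \<and>
     (\<forall>(i, j) \<in> cells lam. S i j \<noteq> {}) \<and>
     (\<forall>(i, j) \<in> cells lam. \<forall>(i', j') \<in> cells lam. (i, j) \<noteq> (i', j') \<longrightarrow> S i j \<inter> S i' j' = {}) \<and>
     (\<Union>(i, j) \<in> cells lam. S i j) = {1..sum_list lam + k} \<and>
     (\<forall>(i, j) \<in> cells lam. \<forall>(i', j') \<in> cells lam.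
        (i, j) \<noteq> (i', j') \<and> i \<le> i' \<and> j \<le> j' \<longrightarrow> Max (S i j) < Min (S i' j')) }"

definition alpha_word :: "nat \<Rightarrow> nat \<Rightarrow> (nat \<Rightarrow> nat \<Rightarrow> nat set) \<Rightarrow> nat list" where
  "alpha_word n b T = concat (map (\<lambda>j.
     let A = T 0 j; B = (if j = b - 1 then T 1 j - {n} else T 1 j) in
       sorted_list_of_set (A - {Max A}) @ sorted_list_of_set B @ [Max A]) [0..<b])"

definition avoids321 :: "nat list \<Rightarrow> bool" where
  "avoids321 xs = (\<not> (\<exists>i j l. i < j \<and> j < l \<and> l < length xs \<and> xs ! i > xs ! j \<and> xs ! j > xs ! l))"

definition rl_min_values :: "nat list \<Rightarrow> nat set" where
  "rl_min_values xs = {xs ! i | i. i < length xs \<and> (\<forall>j. i < j \<and> j < length xs \<longrightarrow> xs ! i < xs ! j)}"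

definition inner_valleys :: "nat list \<Rightarrow> nat" where
  "inner_valleys xs = card {j. 0 < j \<and> j + 1 < length xs \<and> xs ! (j - 1) > xs ! j \<and> xs ! j < xs ! (j + 1)}"

definition perms321 :: "nat \<Rightarrow> nat list set" where
  "perms321 m = {xs. distinct xs \<and> set xs = {1..m} \<and> avoids321 xs}"

text \<open>Disjoint union over b \<ge> 1, k \<ge> 0 with 2b + k = n, tagged by b (k = n - 2b).\<close>
definition SYT_two_rows :: "nat \<Rightarrow> (nat \<times> (nat \<Rightarrow> nat \<Rightarrow> nat set)) set" where
  "SYT_two_rows n = {(b, T). 1 \<le> b \<and> 2 * b \<le> n \<and> T \<in> SYT_plus [b, b] (n - 2 * b)}"

end

theory Submission
  imports Defs
begin

text \<open>Every top entry of \<open>T\<close> is smaller than all letters following it in \<open>alpha(T)\<close>, while every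
  bottom entry is followed by the larger maximum of its column's top cell. Hence the right-to-left
  minima of \<open>alpha(T)\<close> are exactly the top entries, and the other letters, the bottom entries,
  increase from left to right; a word whose non-right-to-left-minima increase is precisely a
  321-avoiding word. Conversely the columns can be read off any 321-avoiding word: a column ends
  at each right-to-left minimum preceded by a letter that is not one, and at the last letter.
  Splitting the word there and sorting each block into right-to-left minima (top) and the rest
  (bottom) inverts \<open>alpha\<close>. Finally, in a 321-avoiding word the inner valleys are exactly the
  block ends other than the last letter, so there are \<open>b - 1\<close> of them.\<close>

section \<open>Precedence in a list\<close>

definition precedes :: "'a list \<Rightarrow> 'a \<Rightarrow> 'a \<Rightarrow> bool" where
  "precedes xs x y \<longleftrightarrow> (\<exists>i j. i < j \<and> j < length xs \<and> xs ! i = x \<and> xs ! j = y)"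

lemma precedes_in_set: "precedes xs x y \<Longrightarrow> x \<in> set xs \<and> y \<in> set xs"
  unfolding precedes_def by auto

lemma precedes_nth_iff:
  "distinct xs \<Longrightarrow> i < length xs \<Longrightarrow> j < length xs \<Longrightarrow> precedes xs (xs ! i) (xs ! j) \<longleftrightarrow> i < j"
  unfolding precedes_def by (auto simp: nth_eq_iff_index_eq)

lemma precedes_append:
  "precedes (xs @ ys) x y \<longleftrightarrow> precedes xs x y \<or> precedes ys x y \<or> (x \<in> set xs \<and> y \<in> set ys)"
proof
  assume "precedes (xs @ ys) x y"
  then obtain i j where ij: "i < j" "j < length (xs @ ys)" "(xs @ ys) ! i = x" "(xs @ ys) ! j = y"
    unfolding precedes_def by blast
  consider "j < length xs" | "i < length xs" "length xs \<le> j" | "length xs \<le> i"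
    using ij(1) by linarith
  then show "precedes xs x y \<or> precedes ys x y \<or> (x \<in> set xs \<and> y \<in> set ys)"
  proof cases
    case 1
    then have "precedes xs x y"
      unfolding precedes_def using ij by (intro exI[of _ i] exI[of _ j]) (auto simp: nth_append)
    then show ?thesis ..
  next
    case 2
    then show ?thesis using ij by (auto simp: nth_append)
  next
    case 3
    then have "precedes ys x y" unfolding precedes_def using ij
      by (intro exI[of _ "i - length xs"] exI[of _ "j - length xs"]) (auto simp: nth_append)
    then show ?thesis by blast
  qed
next
  assume "precedes xs x y \<or> precedes ys x y \<or> (x \<in> set xs \<and> y \<in> set ys)"
  then show "precedes (xs @ ys) x y"
  proof (elim disjE)
    assume "precedes xs x y"
    then obtain i j where "i < j" "j < length xs" "xs ! i = x" "xs ! j = y"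
      unfolding precedes_def by blast
    then show ?thesis
      unfolding precedes_def by (intro exI[of _ i] exI[of _ j]) (auto simp: nth_append)
  next
    assume "precedes ys x y"
    then obtain i j where "i < j" "j < length ys" "ys ! i = x" "ys ! j = y"
      unfolding precedes_def by blast
    then show ?thesis unfolding precedes_def
      by (intro exI[of _ "i + length xs"] exI[of _ "j + length xs"]) (auto simp: nth_append)
  next
    assume "x \<in> set xs \<and> y \<in> set ys"
    then obtain i j where "i < length xs" "j < length ys" "xs ! i = x" "ys ! j = y"
      by (auto simp: in_set_conv_nth)
    then show ?thesis unfolding precedes_def
      by (intro exI[of _ i] exI[of _ "j + length xs"]) (auto simp: nth_append)
  qed
qed

lemma precedes_singleton [simp]: "\<not> precedes [a] x y"
  unfolding precedes_def by auto

lemma precedes_Cons: "precedes (a # xs) x y \<longleftrightarrow> (x = a \<and> y \<in> set xs) \<or> precedes xs x y"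
  using precedes_append[of "[a]" xs x y] by auto

lemma precedes_sorted_wrt:
  assumes "sorted_wrt (<) xs"
  shows "precedes xs x y \<longleftrightarrow> x \<in> set xs \<and> y \<in> set xs \<and> (x::'a::linorder) < y"
proof
  assume "precedes xs x y"
  then show "x \<in> set xs \<and> y \<in> set xs \<and> x < y"
    using assms unfolding precedes_def by (auto simp: sorted_wrt_iff_nth_less)
next
  assume xy: "x \<in> set xs \<and> y \<in> set xs \<and> x < y"
  then obtain i j where ij: "i < length xs" "j < length xs" "xs ! i = x" "xs ! j = y"
    by (auto simp: in_set_conv_nth)
  have "i < j" using assms ij xy by (metis less_asym linorder_neqE_nat sorted_wrt_iff_nth_less)
  then show "precedes xs x y" unfolding precedes_def using ij by blast
qed

lemma precedes_sorted_list_of_set: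
  "finite S \<Longrightarrow> precedes (sorted_list_of_set S) x y \<longleftrightarrow> x \<in> S \<and> y \<in> S \<and> (x::'a::linorder) < y"
  by (subst precedes_sorted_wrt) auto

lemma precedes_irrefl: "distinct xs \<Longrightarrow> \<not> precedes xs x x"
  unfolding precedes_def by (auto simp: nth_eq_iff_index_eq)

lemma precedes_trans: "distinct xs \<Longrightarrow> precedes xs x y \<Longrightarrow> precedes xs y z \<Longrightarrow> precedes xs x z"
  unfolding precedes_def by (metis nth_eq_iff_index_eq order.strict_trans)

lemma precedes_asym: "distinct xs \<Longrightarrow> precedes xs x y \<Longrightarrow> \<not> precedes xs y x"
  using precedes_trans precedes_irrefl by fast

lemma precedes_total:
  "distinct xs \<Longrightarrow> x \<in> set xs \<Longrightarrow> y \<in> set xs \<Longrightarrow> x \<noteq> y \<Longrightarrow> precedes xs x y \<or> precedes xs y x"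
  unfolding precedes_def by (auto simp: in_set_conv_nth) (metis linorder_neqE_nat)

lemma precedes_adjacent:
  assumes "distinct xs" "Suc p < length xs"
  shows "\<not> (precedes xs (xs ! p) z \<and> precedes xs z (xs ! Suc p))"
proof
  assume z: "precedes xs (xs ! p) z \<and> precedes xs z (xs ! Suc p)"
  then obtain q where "q < length xs" "xs ! q = z" unfolding precedes_def by blast
  then show False using z assms precedes_nth_iff[OF assms(1)] by (metis Suc_lessD not_less_eq)
qed

lemma precedes_nth_pred:
  assumes "distinct xs" "0 < p" "p < length xs" "precedes xs x (xs ! p)" "x \<noteq> xs ! (p - 1)"
  shows "precedes xs x (xs ! (p - 1))"
proof -
  obtain r where r: "r < p" "xs ! r = x"
    using assms(1,3,4) unfolding precedes_def by (auto simp: nth_eq_iff_index_eq)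
  then have "r < p - 1" using assms(5) by (cases "r = p - 1") auto
  then show ?thesis unfolding precedes_def using r assms(3)
    by (intro exI[of _ r] exI[of _ "p - 1"]) auto
qed

lemma distinct_eq_if_precedes_imp:
  assumes "distinct xs" "distinct ys" "set xs = set ys"
    and "\<And>x y. precedes xs x y \<Longrightarrow> precedes ys x y"
  shows "xs = ys"
  using assms
proof (induction xs arbitrary: ys)
  case Nil
  then show ?case by simp
next
  case (Cons x xs)
  obtain y ys' where ys: "ys = y # ys'"
    using Cons.prems(3) by (cases ys) auto
  have "y = x"
  proof (rule ccontr)
    assume "y \<noteq> x"
    then have "precedes (x # xs) x y" using Cons.prems(3) ys by (auto simp: precedes_Cons)
    then have "precedes ys' x y" using Cons.prems(4) ys \<open>y \<noteq> x\<close> by (auto simp: precedes_Cons)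
    then show False using Cons.prems(2) ys by (auto dest: precedes_in_set)
  qed
  have "xs = ys'"
  proof (rule Cons.IH)
    show "set xs = set ys'" using Cons.prems(1-3) ys \<open>y = x\<close> by auto
    show "precedes ys' u v" if "precedes xs u v" for u v
      using that Cons.prems(1,4) ys \<open>y = x\<close>
      by (auto simp: precedes_Cons dest: precedes_in_set)
  qed (use Cons.prems ys in auto)
  then show ?case using ys \<open>y = x\<close> by simp
qed

lemma distinct_concat_map_upt:
  assumes "\<And>j. j < c \<Longrightarrow> distinct (f j)"
    and "\<And>j j'. j < c \<Longrightarrow> j' < c \<Longrightarrow> j \<noteq> j' \<Longrightarrow> set (f j) \<inter> set (f j') = {}"
  shows "distinct (concat (map f [0..<c]))"
  using assms
proof (induction c)
  case (Suc c)
  have "set (f j) \<inter> set (f c) = {}" if "j < c" for j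
    using Suc.prems(2) that by simp
  then have "set (concat (map f [0..<c])) \<inter> set (f c) = {}" by (auto simp: disjoint_iff)
  then show ?case using Suc by simp
qed simp

lemma precedes_concat_map_upt:
  assumes "\<And>j j'. j < c \<Longrightarrow> j' < c \<Longrightarrow> j \<noteq> j' \<Longrightarrow> set (f j) \<inter> set (f j') = {}"
    and "j < c" "j' < c" "x \<in> set (f j)" "y \<in> set (f j')"
  shows "precedes (concat (map f [0..<c])) x y \<longleftrightarrow> j < j' \<or> (j = j' \<and> precedes (f j) x y)"
  using assms
proof (induction c arbitrary: j j')
  case 0
  then show ?case by simp
next
  case (Suc c)
  let ?prefix = "concat (map f [0..<c])"
  have notin_last: "z \<notin> set (f c)" if "z \<in> set (f i)" "i < c" for z i
    using Suc.prems(1)[of i c] that by auto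
  have notin_prefix: "z \<notin> set ?prefix" if "z \<in> set (f c)" for z
    using notin_last that by force
  have split: "precedes (concat (map f [0..<Suc c])) x y \<longleftrightarrow>
      precedes ?prefix x y \<or> precedes (f c) x y \<or> (x \<in> set ?prefix \<and> y \<in> set (f c))"
    by (simp add: precedes_append)
  consider "j < c" "j' < c" | "j < c" "j' = c" | "j = c" "j' < c" | "j = c" "j' = c"
    using Suc.prems(2,3) by linarith
  then show ?case
  proof cases
    case 1
    then have "y \<notin> set (f c)" using notin_last Suc.prems(5) by blast
    then show ?thesis unfolding split using 1 Suc.IH[of j j'] Suc.prems(1,4,5)
      by (auto dest: precedes_in_set)
  next
    case 2
    then show ?thesis unfolding split using Suc.prems(4,5) by auto
  next
    case 3
    then have "x \<notin> set ?prefix" "y \<notin> set (f c)"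
      using notin_prefix notin_last Suc.prems(4,5) by blast+
    then show ?thesis unfolding split using 3 by (auto dest: precedes_in_set)
  next
    case 4
    then have "x \<notin> set ?prefix" using notin_prefix Suc.prems(4) by blast
    then show ?thesis unfolding split using 4 by (auto dest: precedes_in_set)
  qed
qed

section \<open>Right-to-left minima and blocks of a word\<close>

lemma rl_min_values_subset: "rl_min_values w \<subseteq> set w"
  unfolding rl_min_values_def by auto

lemma rl_min_values_nth_iff:
  assumes "distinct w" "i < length w"
  shows "w ! i \<in> rl_min_values w \<longleftrightarrow> (\<forall>j. i < j \<and> j < length w \<longrightarrow> w ! i < w ! j)"
  using assms unfolding rl_min_values_def by (auto simp: nth_eq_iff_index_eq)

lemma rl_min_values_iff_precedes:
  assumes "distinct w" "x \<in> set w"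
  shows "x \<in> rl_min_values w \<longleftrightarrow> (\<forall>y. precedes w x y \<longrightarrow> x < y)"
proof -
  obtain i where i: "i < length w" "x = w ! i" using assms(2) by (auto simp: in_set_conv_nth)
  have "precedes w x y \<longleftrightarrow> (\<exists>j. i < j \<and> j < length w \<and> w ! j = y)" for y
    using i assms(1) unfolding precedes_def by (auto simp: nth_eq_iff_index_eq)
  then show ?thesis using rl_min_values_nth_iff[OF assms(1) i(1)] i(2) by auto
qed

lemma rl_min_precedes_less:
  "distinct w \<Longrightarrow> x \<in> rl_min_values w \<Longrightarrow> precedes w x y \<Longrightarrow> x < y"
  using rl_min_values_iff_precedes rl_min_values_subset by blast

lemma not_rl_min_precedes_smaller:
  assumes "distinct w" "x \<in> set w" "x \<notin> rl_min_values w"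
  shows "\<exists>y. precedes w x y \<and> y < x"
proof -
  obtain y where "precedes w x y" "\<not> x < y"
    using rl_min_values_iff_precedes[OF assms(1,2)] assms(3) by blast
  moreover then have "x \<noteq> y" using assms(1) precedes_irrefl by metis
  ultimately show ?thesis by (intro exI[of _ y]) auto
qed

lemma avoids321_iff_non_rl_min_increasing:
  assumes "distinct w"
  shows "avoids321 w \<longleftrightarrow>
    (\<forall>x y. precedes w x y \<longrightarrow> x \<notin> rl_min_values w \<longrightarrow> y \<notin> rl_min_values w \<longrightarrow> x < y)"
proof
  assume avoids: "avoids321 w"
  show "\<forall>x y. precedes w x y \<longrightarrow> x \<notin> rl_min_values w \<longrightarrow> y \<notin> rl_min_values w \<longrightarrow> x < y"
  proof (intro allI impI)
    fix x y assume xy: "precedes w x y" "x \<notin> rl_min_values w" "y \<notin> rl_min_values w"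
    obtain i j where ij: "i < j" "j < length w" "w ! i = x" "w ! j = y"
      using xy(1) unfolding precedes_def by blast
    obtain l where l: "j < l" "l < length w" "\<not> w ! j < w ! l"
      using xy(3) rl_min_values_nth_iff[OF assms ij(2)] ij(4) by auto
    have "w ! l \<noteq> w ! j" using l ij(2) assms by (simp add: nth_eq_iff_index_eq)
    then have "w ! l < y" using l ij(4) by simp
    moreover have "x \<noteq> y" using xy(1) precedes_irrefl[OF assms] by metis
    ultimately show "x < y"
      using avoids ij l unfolding avoids321_def by (metis linorder_neqE_nat)
  qed
next
  assume increasing: "\<forall>x y. precedes w x y \<longrightarrow> x \<notin> rl_min_values w \<longrightarrow> y \<notin> rl_min_values w \<longrightarrow> x < y"
  show "avoids321 w"
    unfolding avoids321_def
  proof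
    assume "\<exists>i j l. i < j \<and> j < l \<and> l < length w \<and> w ! i > w ! j \<and> w ! j > w ! l"
    then obtain i j l where h: "i < j" "j < l" "l < length w" "w ! i > w ! j" "w ! j > w ! l"
      by blast
    have len: "i < length w" "j < length w" using h by simp_all
    have "w ! i \<notin> rl_min_values w"
      using rl_min_values_nth_iff[OF assms len(1)] h(1,4) len(2) by auto
    moreover have "w ! j \<notin> rl_min_values w"
      using rl_min_values_nth_iff[OF assms len(2)] h(2,3,5) by auto
    moreover have "precedes w (w ! i) (w ! j)"
      unfolding precedes_def using h(1) len(2) by blast
    ultimately have "w ! i < w ! j" using increasing by blast
    then show False using h(4) by simp
  qed
qed

text \<open>Column \<open>j\<close> of \<open>alpha(T)\<close> is the block of letters ending with \<open>max A\<^sub>j\<close>, and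
  \<open>block_index w x\<close> recovers the column of \<open>x\<close>.\<close>
definition block_end_pos :: "nat list \<Rightarrow> nat \<Rightarrow> bool" where
  "block_end_pos w p \<longleftrightarrow> p < length w \<and> w ! p \<in> rl_min_values w \<and>
     (p = length w - 1 \<or> (0 < p \<and> w ! (p - 1) \<notin> rl_min_values w))"

definition block_ends :: "nat list \<Rightarrow> nat set" where
  "block_ends w = (\<lambda>p. w ! p) ` {p. block_end_pos w p}"

definition block_index :: "nat list \<Rightarrow> nat \<Rightarrow> nat" where
  "block_index w x = card {c \<in> block_ends w. precedes w c x}"

lemma block_end_pos_last: "distinct w \<Longrightarrow> w \<noteq> [] \<Longrightarrow> block_end_pos w (length w - 1)"
  unfolding block_end_pos_def using rl_min_values_nth_iff by auto

lemma card_block_ends: "distinct w \<Longrightarrow> card (block_ends w) = card {p. block_end_pos w p}"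
  unfolding block_ends_def
  by (rule card_image) (auto simp: inj_on_def block_end_pos_def nth_eq_iff_index_eq)

lemma block_end_pos_if_inner_valley:
  assumes "distinct w" "avoids321 w"
    and p: "0 < p" "p + 1 < length w" "w ! (p - 1) > w ! p" "w ! p < w ! (p + 1)"
  shows "block_end_pos w p"
proof -
  have "w ! p \<in> rl_min_values w"
  proof (rule ccontr)
    assume "w ! p \<notin> rl_min_values w"
    then obtain l where l: "p < l" "l < length w" "\<not> w ! p < w ! l"
      using rl_min_values_nth_iff[OF assms(1), of p] p by auto
    have "w ! l \<noteq> w ! p" using l assms(1) by (simp add: nth_eq_iff_index_eq)
    then have "w ! l < w ! p" using l by simp
    moreover have "p - 1 < p" using p by simp
    ultimately show False using assms(2) p l(1,2) unfolding avoids321_def by blast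
  qed
  moreover have "w ! (p - 1) \<notin> rl_min_values w"
  proof
    assume "w ! (p - 1) \<in> rl_min_values w"
    moreover have "p - 1 < p" "p - 1 < length w" using p by auto
    ultimately have "w ! (p - 1) < w ! p"
      using rl_min_values_nth_iff[OF assms(1)] p by auto
    then show False using p by simp
  qed
  ultimately show "block_end_pos w p"
    unfolding block_end_pos_def using p by auto
qed

lemma inner_valley_if_block_end_pos:
  assumes "distinct w" "block_end_pos w p" "p + 1 < length w"
  shows "0 < p \<and> w ! (p - 1) > w ! p \<and> w ! p < w ! (p + 1)"
proof -
  have p: "p < length w" "w ! p \<in> rl_min_values w" "0 < p" "w ! (p - 1) \<notin> rl_min_values w"
    using assms(2,3) unfolding block_end_pos_def by auto
  have rise: "w ! p < w ! (p + 1)" using rl_min_values_nth_iff[OF assms(1), of p] p assms(3) by auto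
  obtain l where l: "p - 1 < l" "l < length w" "\<not> w ! (p - 1) < w ! l"
    using rl_min_values_nth_iff[OF assms(1), of "p - 1"] p by auto
  have "w ! l \<noteq> w ! (p - 1)" using l assms(1) by (simp add: nth_eq_iff_index_eq)
  then have "w ! l < w ! (p - 1)" using l by simp
  moreover have "w ! p \<le> w ! l"
  proof (cases "l = p")
    case False
    then have "p < l" using l(1) p(3) by simp
    then show ?thesis using l(2) rl_min_values_nth_iff[OF assms(1), of p] p(1,2) by auto
  qed simp
  ultimately show ?thesis using p(3) rise by simp
qed

lemma inner_valleys_eq_card_block_ends:
  assumes "distinct w" "avoids321 w" "w \<noteq> []"
  shows "inner_valleys w = card (block_ends w) - 1"
proof -
  have valleys: "{p. 0 < p \<and> p + 1 < length w \<and> w ! (p - 1) > w ! p \<and> w ! p < w ! (p + 1)} =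
      {p. block_end_pos w p \<and> p + 1 < length w}"
    using block_end_pos_if_inner_valley[OF assms(1,2)] inner_valley_if_block_end_pos[OF assms(1)]
    by blast
  have "{p. block_end_pos w p} = insert (length w - 1) {p. block_end_pos w p \<and> p + 1 < length w}"
    using block_end_pos_last[OF assms(1,3)] unfolding block_end_pos_def by auto
  moreover have "finite {p. block_end_pos w p}" unfolding block_end_pos_def by auto
  ultimately have "card {p. block_end_pos w p} = Suc (card {p. block_end_pos w p \<and> p + 1 < length w})"
    using assms(3) by (simp add: card_insert_if)
  then show ?thesis unfolding inner_valleys_def card_block_ends[OF assms(1)] valleys by simp
qed

section \<open>Two-row tableaux\<close>

lemma cells_two_rows: "cells [b, b] = {(i, j). i < 2 \<and> j < b}"
  unfolding cells_def by (auto simp: less_2_cases_iff nth_Cons split: nat.splits)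

lemma SYT_plus_two_rows_iff:
  "T \<in> SYT_plus [b, b] k \<longleftrightarrow>
     (\<forall>i j. \<not> (i < 2 \<and> j < b) \<longrightarrow> T i j = {}) \<and>
     (\<forall>i<2. \<forall>j<b. T i j \<noteq> {}) \<and>
     (\<forall>i<2. \<forall>j<b. \<forall>i'<2. \<forall>j'<b. (i, j) \<noteq> (i', j') \<longrightarrow> T i j \<inter> T i' j' = {}) \<and>
     (\<Union>i<2. \<Union>j<b. T i j) = {1..2 * b + k} \<and>
     (\<forall>i<2. \<forall>j<b. \<forall>i'<2. \<forall>j'<b. (i, j) \<noteq> (i', j') \<and> i \<le> i' \<and> j \<le> j' \<longrightarrow>
        Max (T i j) < Min (T i' j'))"
proof -
  have "(\<Union>(i, j) \<in> cells [b, b]. T i j) = (\<Union>i<2. \<Union>j<b. T i j)"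
    unfolding cells_two_rows by auto
  then show ?thesis unfolding SYT_plus_def cells_two_rows by (simp add: mult_2)
qed

definition two_row_tableau :: "nat \<Rightarrow> nat \<Rightarrow> (nat \<Rightarrow> nat set) \<Rightarrow> (nat \<Rightarrow> nat set) \<Rightarrow> nat \<Rightarrow> nat \<Rightarrow> nat set"
  where "two_row_tableau n b A B i j =
    (if j < b then if i = 0 then A j else if i = 1 then B j \<union> (if j = b - 1 then {n} else {}) else {}
     else {})"

lemma two_row_tableau_cong:
  "(\<And>j. j < b \<Longrightarrow> A j = A' j) \<Longrightarrow> (\<And>j. j < b \<Longrightarrow> B j = B' j) \<Longrightarrow>
    two_row_tableau n b A B = two_row_tableau n b A' B'"
  unfolding two_row_tableau_def by (intro ext) auto

definition top_entries :: "nat list \<Rightarrow> nat \<Rightarrow> nat set" where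
  "top_entries w j = {x \<in> rl_min_values w. block_index w x = j}"

definition bottom_entries :: "nat list \<Rightarrow> nat \<Rightarrow> nat set" where
  "bottom_entries w j = {x \<in> set w - rl_min_values w. block_index w x = j}"

definition tableau_of_word :: "nat \<Rightarrow> nat list \<Rightarrow> nat \<times> (nat \<Rightarrow> nat \<Rightarrow> nat set)" where
  "tableau_of_word n w = (let b = card (block_ends w) in
     (b, two_row_tableau n b (top_entries w) (bottom_entries w)))"

section \<open>The word of a two-row filling\<close>

text \<open>\<open>A j\<close> and \<open>B j\<close> are the top and bottom entries of column \<open>j\<close> of a two-row tableau with
  the largest entry removed, so only the last bottom cell may be empty.\<close>
locale two_row_filling =
  fixes b :: nat and A B :: "nat \<Rightarrow> nat set"
  assumes b_pos: "1 \<le> b"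
    and finite_A: "\<And>j. finite (A j)" and finite_B: "\<And>j. finite (B j)"
    and A_nonempty: "\<And>j. j < b \<Longrightarrow> A j \<noteq> {}"
    and B_nonempty: "\<And>j. Suc j < b \<Longrightarrow> B j \<noteq> {}"
    and A_less_A: "\<And>j j' x y. j < j' \<Longrightarrow> j' < b \<Longrightarrow> x \<in> A j \<Longrightarrow> y \<in> A j' \<Longrightarrow> x < y"
    and B_less_B: "\<And>j j' x y. j < j' \<Longrightarrow> j' < b \<Longrightarrow> x \<in> B j \<Longrightarrow> y \<in> B j' \<Longrightarrow> x < y"
    and A_less_B: "\<And>j j' x y. j \<le> j' \<Longrightarrow> j' < b \<Longrightarrow> x \<in> A j \<Longrightarrow> y \<in> B j' \<Longrightarrow> x < y"
    and A_B_disjoint: "\<And>j j'. j < b \<Longrightarrow> j' < b \<Longrightarrow> A j \<inter> B j' = {}"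
begin

definition top_max :: "nat \<Rightarrow> nat" where
  "top_max j = Max (A j)"

definition block :: "nat \<Rightarrow> nat list" where
  "block j = sorted_list_of_set (A j - {top_max j}) @ sorted_list_of_set (B j) @ [top_max j]"

definition word :: "nat list" where
  "word = concat (map block [0..<b])"

lemma top_max_in: "j < b \<Longrightarrow> top_max j \<in> A j"
  unfolding top_max_def using A_nonempty finite_A by auto

lemma top_max_ge: "x \<in> A j \<Longrightarrow> x \<le> top_max j"
  unfolding top_max_def using finite_A by auto

lemma top_max_notin_B: "j < b \<Longrightarrow> j' < b \<Longrightarrow> top_max j \<notin> B j'"
  using A_B_disjoint top_max_in by blast

lemma top_max_strict_mono: "j < j' \<Longrightarrow> j' < b \<Longrightarrow> top_max j < top_max j'"
  using A_less_A top_max_in by (meson order.strict_trans)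

lemma inj_on_top_max: "inj_on top_max {..<b}"
  by (rule inj_onI) (metis lessThan_iff nat_neq_iff top_max_strict_mono less_irrefl)

lemma set_block: "j < b \<Longrightarrow> set (block j) = A j \<union> B j"
  unfolding block_def using finite_A finite_B top_max_in by auto

lemma distinct_block: "j < b \<Longrightarrow> distinct (block j)"
  unfolding block_def using finite_A finite_B top_max_in A_B_disjoint[of j j] by auto

lemma A_unique: "j < b \<Longrightarrow> j' < b \<Longrightarrow> x \<in> A j \<Longrightarrow> x \<in> A j' \<Longrightarrow> j = j'"
  using A_less_A by (metis less_irrefl nat_neq_iff)

lemma B_unique: "j < b \<Longrightarrow> j' < b \<Longrightarrow> x \<in> B j \<Longrightarrow> x \<in> B j' \<Longrightarrow> j = j'"
  using B_less_B by (metis less_irrefl nat_neq_iff)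

lemma disjoint_blocks: "j < b \<Longrightarrow> j' < b \<Longrightarrow> j \<noteq> j' \<Longrightarrow> set (block j) \<inter> set (block j') = {}"
  using A_unique[of j j'] B_unique[of j j'] A_B_disjoint[of j j'] A_B_disjoint[of j' j]
  by (auto simp: set_block)

lemma precedes_block_iff:
  assumes "j < b"
  shows "precedes (block j) x y \<longleftrightarrow>
    (x \<in> A j - {top_max j} \<and> y \<in> A j - {top_max j} \<and> x < y) \<or>
    (x \<in> A j - {top_max j} \<and> y \<in> B j) \<or>
    (x \<in> (A j - {top_max j}) \<union> B j \<and> y = top_max j) \<or>
    (x \<in> B j \<and> y \<in> B j \<and> x < y)"
  unfolding block_def precedes_append using finite_A[of j] finite_B[of j]
  by (auto simp: precedes_sorted_list_of_set)

lemma word_distinct: "distinct word"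
  unfolding word_def by (rule distinct_concat_map_upt) (auto simp: distinct_block disjoint_blocks)

lemma set_word: "set word = (\<Union>j<b. A j \<union> B j)"
  unfolding word_def using set_block by auto

lemma precedes_word_iff:
  assumes "j < b" "j' < b" "x \<in> A j \<union> B j" "y \<in> A j' \<union> B j'"
  shows "precedes word x y \<longleftrightarrow> j < j' \<or> (j = j' \<and> precedes (block j) x y)"
  unfolding word_def
  by (rule precedes_concat_map_upt[OF disjoint_blocks assms(1,2)]) (use assms set_block in auto)

lemma precedes_top_max_iff:
  assumes "j < b" "j' < b" "x \<in> A j \<union> B j"
  shows "precedes word x (top_max j') \<longleftrightarrow> j < j' \<or> (j = j' \<and> x \<noteq> top_max j)"
  using precedes_word_iff[OF assms, of "top_max j'"] precedes_block_iff[OF assms(1), of x "top_max j"]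
    top_max_in assms top_max_notin_B by auto

lemma top_max_precedes_iff:
  assumes "j < b" "j' < b" "y \<in> A j' \<union> B j'"
  shows "precedes word (top_max j) y \<longleftrightarrow> j < j'"
  using precedes_word_iff[OF assms(1,2) _ assms(3), of "top_max j"]
    precedes_block_iff[OF assms(1), of "top_max j" y] top_max_in assms top_max_notin_B by auto

lemma rl_min_values_word: "rl_min_values word = (\<Union>j<b. A j)"
proof (intro set_eqI iffI)
  fix x assume x: "x \<in> rl_min_values word"
  then obtain j where j: "j < b" "x \<in> A j \<union> B j"
    using rl_min_values_subset set_word by blast
  show "x \<in> (\<Union>j<b. A j)"
  proof (rule ccontr)
    assume "x \<notin> (\<Union>j<b. A j)"
    then have "x \<in> B j" using j by auto
    then have "precedes word x (top_max j)" using precedes_top_max_iff[OF j(1) j] top_max_notin_B j by auto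
    then have "x < top_max j" using rl_min_precedes_less[OF word_distinct x] by blast
    then show False using A_less_B[of j j "top_max j" x] top_max_in j \<open>x \<in> B j\<close> by auto
  qed
next
  fix x assume "x \<in> (\<Union>j<b. A j)"
  then obtain j where j: "j < b" "x \<in> A j" by auto
  have "x < y" if xy: "precedes word x y" for y
  proof -
    obtain j' where j': "j' < b" "y \<in> A j' \<union> B j'"
      using precedes_in_set[OF xy] set_word by blast
    have "j < j' \<or> (j = j' \<and> precedes (block j) x y)"
      using precedes_word_iff[OF j(1) j'(1) _ j'(2)] j(2) xy by auto
    then show "x < y"
      using A_less_A[of j j' x y] A_less_B[of j j' x y] j j' top_max_ge[OF j(2)]
        precedes_block_iff[OF j(1), of x y] A_B_disjoint[of j j] by auto
  qed
  moreover have "x \<in> set word" using j set_word by auto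
  ultimately show "x \<in> rl_min_values word"
    using rl_min_values_iff_precedes[OF word_distinct] by blast
qed

lemma word_avoids321: "avoids321 word"
  unfolding avoids321_iff_non_rl_min_increasing[OF word_distinct]
proof (intro allI impI)
  fix x y assume xy: "precedes word x y" "x \<notin> rl_min_values word" "y \<notin> rl_min_values word"
  have "x \<in> set word" "y \<in> set word" using precedes_in_set[OF xy(1)] by auto
  then obtain j j' where j: "j < b" "x \<in> B j" and j': "j' < b" "y \<in> B j'"
    using xy(2,3) unfolding set_word rl_min_values_word by blast
  have "j < j' \<or> (j = j' \<and> precedes (block j) x y)"
    using precedes_word_iff[OF j(1) j'(1)] j j' xy(1) by blast
  then show "x < y"
    using B_less_B[OF _ j'(1) j(2) j'(2)] precedes_block_iff[OF j(1), of x y] j j'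
      top_max_notin_B A_B_disjoint[OF j(1) j(1)] by auto
qed

lemma word_nonempty: "word \<noteq> []"
  using set_word top_max_in[of 0] b_pos by auto

lemma block_end_pos_word_imp_top_max:
  assumes p: "block_end_pos word p"
  shows "\<exists>j<b. word ! p = top_max j"
proof (rule ccontr)
  assume not_max: "\<not> (\<exists>j<b. word ! p = top_max j)"
  have p_len: "p < length word" and "word ! p \<in> rl_min_values word"
    using p unfolding block_end_pos_def by auto
  then obtain j where j: "j < b" "word ! p \<in> A j" unfolding rl_min_values_word by blast
  obtain q where q: "q < length word" "word ! q = top_max j"
    using top_max_in[OF j(1)] set_word j(1) by (metis UN_I Un_iff in_set_conv_nth lessThan_iff)
  have "precedes word (word ! p) (top_max j)"
    using precedes_top_max_iff[OF j(1) j(1)] j not_max by auto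
  then have "p < q" using precedes_nth_iff[OF word_distinct p_len q(1)] q(2) by simp
  then have p_pos: "0 < p" and prev: "word ! (p - 1) \<notin> rl_min_values word"
    using p q(1) unfolding block_end_pos_def by auto
  let ?z = "word ! (p - 1)"
  have "?z \<in> set word" using p_len by simp
  then obtain j' where j': "j' < b" "?z \<in> B j'"
    using prev unfolding set_word rl_min_values_word by blast
  have z_before: "precedes word ?z (word ! p)"
    using precedes_nth_iff[OF word_distinct, of "p - 1" p] p_len p_pos by simp
  have "j' < j"
    using precedes_word_iff[OF j'(1) j(1), of ?z "word ! p"] z_before j j'
      precedes_block_iff[OF j(1), of ?z "word ! p"] not_max A_B_disjoint[OF j(1) j(1)] by auto
  then have "precedes word ?z (top_max j')" "precedes word (top_max j') (word ! p)"
    using precedes_top_max_iff[OF j'(1) j'(1), of ?z] top_max_precedes_iff[OF j'(1) j(1), of "word ! p"]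
      j j' top_max_notin_B by auto
  then show False using precedes_adjacent[OF word_distinct, of "p - 1"] p_len p_pos by simp
qed

lemma top_max_last_at_end:
  assumes p: "p < length word" "word ! p = top_max (b - 1)"
  shows "p = length word - 1"
proof (rule ccontr)
  assume "p \<noteq> length word - 1"
  then have p_last: "p < length word - 1" using p by simp
  let ?y = "word ! (length word - 1)"
  have "?y \<in> set word" using p by simp
  then obtain j where j: "j < b" "?y \<in> A j \<union> B j" unfolding set_word by blast
  have "?y \<noteq> word ! p" using p_last p(1) by (simp add: nth_eq_iff_index_eq[OF word_distinct])
  moreover have "j \<le> b - 1" using j(1) by simp
  ultimately have "precedes word ?y (word ! p)"
    using precedes_top_max_iff[OF j(1), of "b - 1" ?y] j b_pos p(2) by auto
  moreover have "length word - 1 < length word" using p(1) by simp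
  ultimately show False
    using precedes_nth_iff[OF word_distinct _ p(1), of "length word - 1"] p_last by simp
qed

lemma before_top_max_not_rl_min:
  assumes j: "Suc j < b" and p: "p < length word" "word ! p = top_max j"
  shows "0 < p" "word ! (p - 1) \<notin> rl_min_values word"
proof -
  have j_less: "j < b" using j by simp
  obtain m where m: "m \<in> B j" using B_nonempty[OF j] by auto
  have m_before: "precedes word m (word ! p)"
    using precedes_top_max_iff[OF j_less j_less, of m] m p(2) top_max_notin_B[OF j_less j_less] by auto
  then obtain q where q: "q < length word" "word ! q = m"
    by (meson in_set_conv_nth precedes_in_set)
  show p_pos: "0 < p" using m_before q precedes_nth_iff[OF word_distinct q(1) p(1)] by simp
  let ?z = "word ! (p - 1)"
  show "?z \<notin> rl_min_values word"
  proof
    assume "?z \<in> rl_min_values word"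
    then obtain j' where j': "j' < b" "?z \<in> A j'" unfolding rl_min_values_word by blast
    have "precedes word ?z (word ! p)"
      using precedes_nth_iff[OF word_distinct, of "p - 1" p] p p_pos by simp
    then have "j' < j \<or> (j' = j \<and> ?z \<noteq> top_max j)"
      using precedes_top_max_iff[OF j'(1) j_less, of ?z] j' p(2) by auto
    then have "precedes word ?z m"
      using precedes_word_iff[OF j'(1) j_less, of ?z m] precedes_block_iff[OF j_less, of ?z m] j' m
      by auto
    then show False using precedes_adjacent[OF word_distinct, of "p - 1" m] m_before p p_pos by simp
  qed
qed

lemma top_max_block_end_pos_word:
  assumes j: "j < b" and p: "p < length word" "word ! p = top_max j"
  shows "block_end_pos word p"
proof -
  have "word ! p \<in> rl_min_values word"
    using p(2) top_max_in[OF j] j unfolding rl_min_values_word by auto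
  moreover have "p = length word - 1 \<or> (0 < p \<and> word ! (p - 1) \<notin> rl_min_values word)"
  proof (cases "Suc j < b")
    case True
    then show ?thesis using before_top_max_not_rl_min[OF True p] by simp
  next
    case False
    then have "j = b - 1" using j by simp
    then show ?thesis using top_max_last_at_end p by simp
  qed
  ultimately show ?thesis unfolding block_end_pos_def using p(1) by simp
qed

lemma block_ends_word: "block_ends word = top_max ` {..<b}"
proof
  show "block_ends word \<subseteq> top_max ` {..<b}"
    unfolding block_ends_def using block_end_pos_word_imp_top_max by auto
  show "top_max ` {..<b} \<subseteq> block_ends word"
  proof
    fix c assume "c \<in> top_max ` {..<b}"
    then obtain j where j: "j < b" "c = top_max j" by auto
    then obtain p where p: "p < length word" "word ! p = c"
      using top_max_in[OF j(1)] set_word by (metis UN_I Un_iff in_set_conv_nth lessThan_iff)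
    have "block_end_pos word p" using top_max_block_end_pos_word[OF j(1) p(1)] j p by simp
    then show "c \<in> block_ends word" unfolding block_ends_def using p(2) by blast
  qed
qed

lemma inner_valleys_word: "inner_valleys word = b - 1"
  using inner_valleys_eq_card_block_ends[OF word_distinct word_avoids321 word_nonempty]
    block_ends_word card_image[OF inj_on_top_max] by simp

lemma block_index_word:
  assumes "j < b" "x \<in> A j \<union> B j"
  shows "block_index word x = j"
proof -
  have "{c \<in> block_ends word. precedes word c x} = top_max ` {..<j}"
    unfolding block_ends_word using top_max_precedes_iff[OF _ assms] assms(1) by auto
  moreover have "inj_on top_max {..<j}"
    using inj_on_top_max assms(1) by (auto intro: inj_on_subset)
  ultimately show ?thesis unfolding block_index_def by (simp add: card_image)
qed

lemma card_entries_ge: "2 * b - 1 \<le> card (\<Union>j<b. A j \<union> B j)"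
proof -
  let ?tops = "top_max ` {..<b}" and ?bottoms = "(\<lambda>j. Min (B j)) ` {..<b - 1}"
  have Min_B: "Min (B j) \<in> B j" if "j < b - 1" for j
    using B_nonempty[of j] finite_B[of j] that by auto
  have "inj_on (\<lambda>j. Min (B j)) {..<b - 1}"
  proof (rule inj_onI)
    fix x y assume "x \<in> {..<b - 1}" "y \<in> {..<b - 1}" "Min (B x) = Min (B y)"
    then show "x = y" using B_unique[of x y "Min (B x)"] Min_B[of x] Min_B[of y] by auto
  qed
  then have "card ?bottoms = b - 1" by (simp add: card_image)
  moreover have "card ?tops = b" by (simp add: card_image[OF inj_on_top_max])
  moreover have "top_max j \<noteq> Min (B j')" if "j < b" "j' < b - 1" for j j'
  proof -
    have "j' < b" using that by simp
    then show ?thesis using A_B_disjoint[of j j'] top_max_in[of j] Min_B[of j'] that by auto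
  qed
  then have "?tops \<inter> ?bottoms = {}" by auto
  ultimately have card_eq: "card (?tops \<union> ?bottoms) = b + (b - 1)"
    by (simp add: card_Un_disjoint)
  have "top_max j \<in> (\<Union>j<b. A j \<union> B j)" if "j < b" for j
    using top_max_in that by blast
  moreover have "Min (B j) \<in> (\<Union>j<b. A j \<union> B j)" if "j < b - 1" for j
    using Min_B[OF that] that by auto
  ultimately have "?tops \<union> ?bottoms \<subseteq> (\<Union>j<b. A j \<union> B j)" by auto
  moreover have "finite (\<Union>j<b. A j \<union> B j)" using finite_A finite_B by auto
  ultimately have "b + (b - 1) \<le> card (\<Union>j<b. A j \<union> B j)"
    using card_mono card_eq by metis
  then show ?thesis by simp
qed

context
  fixes n :: nat
  assumes entries: "(\<Union>j<b. A j \<union> B j) = {1..n - 1}" and n_ge_2: "2 \<le> n"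
begin

lemma entry_less_n:
  assumes "j < b" "x \<in> A j \<union> B j"
  shows "x < n"
proof -
  have "x \<in> (\<Union>j<b. A j \<union> B j)" using assms by blast
  then have "x \<le> n - 1" unfolding entries by simp
  then show ?thesis using n_ge_2 by linarith
qed

lemma two_row_tableau_less:
  assumes "i < 2" "j < b" "i' < 2" "j' < b" "(i, j) \<noteq> (i', j')" "i \<le> i'" "j \<le> j'"
    and x: "x \<in> two_row_tableau n b A B i j" and y: "y \<in> two_row_tableau n b A B i' j'"
  shows "x < y"
proof (cases i)
  case 0
  then have x_top: "x \<in> A j" using x assms(2) by (simp add: two_row_tableau_def)
  show ?thesis
  proof (cases i')
    case 0
    then have "j < j'" "y \<in> A j'"
      using \<open>i = 0\<close> assms(4,5,7) y by (auto simp: two_row_tableau_def)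
    then show ?thesis using A_less_A[OF _ assms(4) x_top] by blast
  next
    case (Suc k)
    then have "i' = 1" using assms(3) by simp
    then have "y \<in> B j' \<or> y = n"
      using y assms(4) by (simp add: two_row_tableau_def split: if_splits)
    then show ?thesis using A_less_B[OF assms(7,4) x_top] entry_less_n[OF assms(2)] x_top by blast
  qed
next
  case (Suc k)
  then have "i = 1" "i' = 1" "j < j'" using assms(1,3,5,6,7) by auto
  then have "j \<noteq> b - 1" using assms(4) by simp
  then have x_bottom: "x \<in> B j" using x assms(2) \<open>i = 1\<close> by (simp add: two_row_tableau_def)
  have "y \<in> B j' \<or> y = n"
    using y assms(4) \<open>i' = 1\<close> by (simp add: two_row_tableau_def split: if_splits)
  then show ?thesis
    using B_less_B[OF \<open>j < j'\<close> assms(4) x_bottom] entry_less_n[OF assms(2)] x_bottom by blast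
qed

lemma two_row_tableau_top_bottom_disjoint:
  assumes "j < b" "j' < b"
  shows "two_row_tableau n b A B 0 j \<inter> two_row_tableau n b A B 1 j' = {}"
  using A_B_disjoint[OF assms] entry_less_n[OF assms(1)] assms
  by (auto simp: two_row_tableau_def)

lemma two_row_tableau_disjoint:
  assumes "i < 2" "j < b" "i' < 2" "j' < b" "(i, j) \<noteq> (i', j')"
  shows "two_row_tableau n b A B i j \<inter> two_row_tableau n b A B i' j' = {}"
proof (cases "i = i'")
  case True
  have False if "x \<in> two_row_tableau n b A B i j" "x \<in> two_row_tableau n b A B i' j'" for x
  proof (cases "j \<le> j'")
    case True
    then show False using two_row_tableau_less[OF assms] that \<open>i = i'\<close> by blast
  next
    case False
    then show False
      using two_row_tableau_less[OF assms(3,4,1,2)] that \<open>i = i'\<close> assms(5) by fastforce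
  qed
  then show ?thesis by blast
next
  case False
  then have "(i = 0 \<and> i' = 1) \<or> (i = 1 \<and> i' = 0)" using assms(1,3) by auto
  then show ?thesis
    using two_row_tableau_top_bottom_disjoint[OF assms(2,4)]
      two_row_tableau_top_bottom_disjoint[OF assms(4,2)] by auto
qed

lemma two_row_tableau_entries: "(\<Union>i<2. \<Union>j<b. two_row_tableau n b A B i j) = {1..n}"
proof -
  let ?T = "two_row_tableau n b A B"
  have "(\<Union>i<2. \<Union>j<b. ?T i j) = (\<Union>j<b. ?T 0 j \<union> ?T 1 j)"
    by (auto simp: less_2_cases_iff)
  also have "\<dots> = (\<Union>j<b. A j \<union> B j) \<union> {n}"
  proof -
    have "n \<in> ?T 1 (b - 1)" using b_pos by (simp add: two_row_tableau_def)
    then have "n \<in> (\<Union>j<b. ?T 0 j \<union> ?T 1 j)" using b_pos by force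
    then show ?thesis by (auto simp: two_row_tableau_def split: if_splits)
  qed
  also have "\<dots> = {1..n}" using entries n_ge_2 by auto
  finally show ?thesis .
qed

lemma two_row_tableau_in_SYT_two_rows: "(b, two_row_tableau n b A B) \<in> SYT_two_rows n"
proof -
  let ?T = "two_row_tableau n b A B"
  have "2 * b - 1 \<le> n - 1" using card_entries_ge unfolding entries by simp
  then have two_b: "2 * b \<le> n" using n_ge_2 by linarith
  have nonempty: "?T i j \<noteq> {}" if "i < 2" "j < b" for i j
  proof (cases "i = 0")
    case False
    then have "i = 1" using that(1) by simp
    then show ?thesis using that(2) B_nonempty[of j] by (auto simp: two_row_tableau_def)
  qed (use that A_nonempty in \<open>simp add: two_row_tableau_def\<close>)
  have finite: "finite (?T i j)" for i j
    using finite_A finite_B by (simp add: two_row_tableau_def)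
  have Max_less_Min: "Max (?T i j) < Min (?T i' j')"
    if "i < 2" "j < b" "i' < 2" "j' < b" "(i, j) \<noteq> (i', j') \<and> i \<le> i' \<and> j \<le> j'" for i j i' j'
    using two_row_tableau_less[of i j i' j'] that finite nonempty
    by (simp add: Max_less_iff Min_gr_iff)
  have union: "(\<Union>i<2. \<Union>j<b. ?T i j) = {1..2 * b + (n - 2 * b)}"
    using two_row_tableau_entries two_b by simp
  have "?T \<in> SYT_plus [b, b] (n - 2 * b)"
    unfolding SYT_plus_two_rows_iff
  proof (intro conjI allI impI)
    show "?T i j = {}" if "\<not> (i < 2 \<and> j < b)" for i j
      using that by (auto simp: two_row_tableau_def)
  qed (use nonempty two_row_tableau_disjoint union Max_less_Min in auto)
  then show ?thesis unfolding SYT_two_rows_def using b_pos two_b by simp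
qed

lemma alpha_word_two_row_tableau: "alpha_word n b (two_row_tableau n b A B) = word"
  unfolding alpha_word_def word_def
proof (rule arg_cong[where f = concat], rule map_cong[OF refl])
  fix j assume "j \<in> set [0..<b]"
  then have j: "j < b" by simp
  have "n \<notin> B j" using entry_less_n[OF j] by blast
  then have "(if j = b - 1 then two_row_tableau n b A B 1 j - {n} else two_row_tableau n b A B 1 j) = B j"
    using j by (auto simp: two_row_tableau_def)
  then show "(let A' = two_row_tableau n b A B 0 j;
      B' = if j = b - 1 then two_row_tableau n b A B 1 j - {n} else two_row_tableau n b A B 1 j
    in sorted_list_of_set (A' - {Max A'}) @ sorted_list_of_set B' @ [Max A']) = block j"
    using j by (simp add: two_row_tableau_def block_def top_max_def Let_def)
qed

end

lemma top_entries_word: "j < b \<Longrightarrow> top_entries word j = A j"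
  unfolding top_entries_def rl_min_values_word using block_index_word by auto

lemma bottom_entries_word: "j < b \<Longrightarrow> bottom_entries word j = B j"
  unfolding bottom_entries_def rl_min_values_word set_word
  using block_index_word A_B_disjoint by fastforce

lemma tableau_of_word_word: "tableau_of_word n word = (b, two_row_tableau n b A B)"
proof -
  have "card (block_ends word) = b"
    unfolding block_ends_word by (simp add: card_image[OF inj_on_top_max])
  moreover have "two_row_tableau n b (top_entries word) (bottom_entries word) = two_row_tableau n b A B"
    by (rule two_row_tableau_cong) (simp_all add: top_entries_word bottom_entries_word)
  ultimately show ?thesis unfolding tableau_of_word_def Let_def by simp
qed

end

section \<open>From tableaux to 321-avoiding permutations\<close>

locale two_row_SYT =
  fixes n b :: nat and T :: "nat \<Rightarrow> nat \<Rightarrow> nat set"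
  assumes in_SYT_two_rows: "(b, T) \<in> SYT_two_rows n"
begin

lemma b_pos: "1 \<le> b" and two_b_le: "2 * b \<le> n" and SYT: "T \<in> SYT_plus [b, b] (n - 2 * b)"
  using in_SYT_two_rows unfolding SYT_two_rows_def by auto

lemma n_ge_2: "2 \<le> n"
  using b_pos two_b_le by simp

lemma empty_outside: "\<not> (i < 2 \<and> j < b) \<Longrightarrow> T i j = {}"
  and nonempty: "i < 2 \<Longrightarrow> j < b \<Longrightarrow> T i j \<noteq> {}"
  and disjoint: "i < 2 \<Longrightarrow> j < b \<Longrightarrow> i' < 2 \<Longrightarrow> j' < b \<Longrightarrow> (i, j) \<noteq> (i', j') \<Longrightarrow>
    T i j \<inter> T i' j' = {}"
  and entries: "(\<Union>i<2. \<Union>j<b. T i j) = {1..n}"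
  and Max_less_Min: "i < 2 \<Longrightarrow> j < b \<Longrightarrow> i' < 2 \<Longrightarrow> j' < b \<Longrightarrow> (i, j) \<noteq> (i', j') \<Longrightarrow>
    i \<le> i' \<Longrightarrow> j \<le> j' \<Longrightarrow> Max (T i j) < Min (T i' j')"
  using SYT two_b_le unfolding SYT_plus_two_rows_iff by simp_all

lemma finite_entry: "finite (T i j)"
proof (cases "i < 2 \<and> j < b")
  case True
  then have "T i j \<subseteq> {1..n}" unfolding entries[symmetric] by blast
  then show ?thesis using finite_subset by blast
qed (simp add: empty_outside)

lemma entry_less:
  assumes "i < 2" "j < b" "i' < 2" "j' < b" "(i, j) \<noteq> (i', j')" "i \<le> i'" "j \<le> j'"
    and "x \<in> T i j" "y \<in> T i' j'"
  shows "x < y"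
proof -
  have "x \<le> Max (T i j)" "Min (T i' j') \<le> y" using assms(8,9) finite_entry by simp_all
  then show ?thesis using Max_less_Min[OF assms(1-7)] by linarith
qed

lemma n_in_last_cell: "n \<in> T 1 (b - 1)"
proof -
  have "n \<in> (\<Union>i<2. \<Union>j<b. T i j)" unfolding entries using n_ge_2 by simp
  then obtain i j where ij: "i < 2" "j < b" "n \<in> T i j" by blast
  show ?thesis
  proof (rule ccontr)
    assume "n \<notin> T 1 (b - 1)"
    then have "(i, j) \<noteq> (1, b - 1)" using ij by auto
    moreover obtain y where y: "y \<in> T 1 (b - 1)" using nonempty[of 1 "b - 1"] b_pos by auto
    ultimately have "n < y" using entry_less[of i j 1 "b - 1" n y] ij b_pos by auto
    moreover have "y \<in> {1..n}" unfolding entries[symmetric] using y b_pos by force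
    ultimately show False by simp
  qed
qed

lemma n_notin_cell: "i < 2 \<Longrightarrow> j < b \<Longrightarrow> (i, j) \<noteq> (1, b - 1) \<Longrightarrow> n \<notin> T i j"
  using disjoint[of i j 1 "b - 1"] n_in_last_cell b_pos by auto

definition bottom :: "nat \<Rightarrow> nat set" where
  "bottom j = T 1 j - {n}"

lemma two_row_filling: "two_row_filling b (T 0) bottom"
proof
  show "1 \<le> b" by (rule b_pos)
  show "finite (T 0 j)" "finite (bottom j)" for j
    unfolding bottom_def using finite_entry by simp_all
  show "T 0 j \<noteq> {}" if "j < b" for j using nonempty that by simp
  show "bottom j \<noteq> {}" if "Suc j < b" for j
    unfolding bottom_def using nonempty[of 1 j] n_notin_cell[of 1 j] that by auto
  show "x < y" if "j < j'" "j' < b" "x \<in> T 0 j" "y \<in> T 0 j'" for j j' x y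
    using entry_less[of 0 j 0 j' x y] that by auto
  show "x < y" if "j < j'" "j' < b" "x \<in> bottom j" "y \<in> bottom j'" for j j' x y
    using entry_less[of 1 j 1 j' x y] that unfolding bottom_def by auto
  show "x < y" if "j \<le> j'" "j' < b" "x \<in> T 0 j" "y \<in> bottom j'" for j j' x y
    using entry_less[of 0 j 1 j' x y] that unfolding bottom_def by auto
  show "T 0 j \<inter> bottom j' = {}" if "j < b" "j' < b" for j j'
    using disjoint[of 0 j 1 j'] that unfolding bottom_def by auto
qed

sublocale two_row_filling b "T 0" bottom
  by (rule two_row_filling)

lemma filling_entries: "(\<Union>j<b. T 0 j \<union> bottom j) = {1..n - 1}"
proof -
  have rows: "(\<Union>i<2. \<Union>j<b. T i j) = (\<Union>j<b. T 0 j \<union> T 1 j)"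
    by (auto simp: less_2_cases_iff)
  have "n \<notin> T 0 j" if "j < b" for j using n_notin_cell that by simp
  then have "(\<Union>j<b. T 0 j \<union> bottom j) = (\<Union>j<b. T 0 j \<union> T 1 j) - {n}"
    unfolding bottom_def by blast
  also have "\<dots> = {1..n} - {n}" using entries rows by simp
  also have "\<dots> = {1..n - 1}" by auto
  finally show ?thesis .
qed

lemma two_row_tableau_eq: "two_row_tableau n b (T 0) bottom = T"
proof (intro ext)
  fix i j
  show "two_row_tableau n b (T 0) bottom i j = T i j"
    using n_in_last_cell n_notin_cell[of 1 j] empty_outside[of i j]
    by (auto simp: two_row_tableau_def bottom_def)
qed

lemma alpha_word_eq: "alpha_word n b T = word"
  using alpha_word_two_row_tableau[OF filling_entries n_ge_2] two_row_tableau_eq by simp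

lemma alpha_word_in_perms321: "alpha_word n b T \<in> perms321 (n - 1)"
  unfolding alpha_word_eq perms321_def
  using word_distinct set_word filling_entries word_avoids321 by simp

lemma tableau_of_alpha_word: "tableau_of_word n (alpha_word n b T) = (b, T)"
  unfolding alpha_word_eq tableau_of_word_word two_row_tableau_eq ..

lemma rl_min_values_alpha_word: "(\<Union>j<b. T 0 j) = rl_min_values (alpha_word n b T)"
  unfolding alpha_word_eq rl_min_values_word ..

lemma inner_valleys_alpha_word: "inner_valleys (alpha_word n b T) = b - 1"
  unfolding alpha_word_eq by (rule inner_valleys_word)

end

section \<open>From 321-avoiding permutations back to tableaux\<close>

locale nonempty_321_avoiding =
  fixes w :: "nat list"
  assumes distinct: "distinct w" and avoids: "avoids321 w" and nonempty: "w \<noteq> []"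
begin

definition num_blocks :: nat where
  "num_blocks = card (block_ends w)"

lemma finite_block_ends: "finite (block_ends w)"
  unfolding block_ends_def block_end_pos_def by auto

lemma block_ends_rl_min: "c \<in> block_ends w \<Longrightarrow> c \<in> rl_min_values w"
  unfolding block_ends_def block_end_pos_def by auto

lemma block_ends_in_set: "c \<in> block_ends w \<Longrightarrow> c \<in> set w"
  using block_ends_rl_min rl_min_values_subset by blast

lemma last_in_block_ends: "last w \<in> block_ends w"
  unfolding block_ends_def using block_end_pos_last[OF distinct nonempty] nonempty
  by (simp add: last_conv_nth)

lemma precedes_last:
  assumes "x \<in> set w" "x \<noteq> last w"
  shows "precedes w x (last w)"
proof -
  obtain i where i: "i < length w" "w ! i = x" using assms(1) by (auto simp: in_set_conv_nth)
  moreover have "i \<noteq> length w - 1" using i assms(2) nonempty by (auto simp: last_conv_nth)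
  ultimately have "i < length w - 1" by simp
  then show ?thesis unfolding precedes_def last_conv_nth[OF nonempty] using i
    by (intro exI[of _ i] exI[of _ "length w - 1"]) auto
qed

lemma not_precedes_last: "\<not> precedes w (last w) y"
  unfolding precedes_def using distinct nonempty
  by (auto simp: last_conv_nth nth_eq_iff_index_eq)

lemma block_index_mono: "precedes w x y \<Longrightarrow> block_index w x \<le> block_index w y"
  unfolding block_index_def
  by (rule card_mono) (auto simp: finite_block_ends intro: precedes_trans[OF distinct])

lemma block_index_strict_mono:
  assumes c: "c \<in> block_ends w" and "c = x \<or> precedes w x c" and cy: "precedes w c y"
  shows "block_index w x < block_index w y"
  unfolding block_index_def
proof (rule psubset_card_mono)
  show "finite {c \<in> block_ends w. precedes w c y}" using finite_block_ends by simp
  have "precedes w x y" using assms(2) cy precedes_trans[OF distinct] by blast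
  then have "{c \<in> block_ends w. precedes w c x} \<subseteq> {c \<in> block_ends w. precedes w c y}"
    using precedes_trans[OF distinct] by blast
  moreover have "c \<notin> {c \<in> block_ends w. precedes w c x}"
    using assms(2) precedes_irrefl[OF distinct] precedes_asym[OF distinct] by auto
  ultimately show "{c \<in> block_ends w. precedes w c x} \<subset> {c \<in> block_ends w. precedes w c y}"
    using c cy by blast
qed

lemma num_blocks_pos: "1 \<le> num_blocks"
  unfolding num_blocks_def using last_in_block_ends finite_block_ends
  by (simp add: Suc_le_eq card_gt_0_iff) blast

lemma block_index_less: "block_index w x < num_blocks"
proof -
  have "{c \<in> block_ends w. precedes w c x} \<subseteq> block_ends w - {last w}"
    using not_precedes_last by auto
  then have "block_index w x \<le> card (block_ends w - {last w})"
    unfolding block_index_def using finite_block_ends by (simp add: card_mono)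
  also have "\<dots> < num_blocks"
    unfolding num_blocks_def by (rule card_Diff1_less[OF finite_block_ends last_in_block_ends])
  finally show ?thesis .
qed

lemma inj_on_block_index: "inj_on (block_index w) (block_ends w)"
proof (rule inj_onI)
  fix c c' assume cc: "c \<in> block_ends w" "c' \<in> block_ends w" "block_index w c = block_index w c'"
  show "c = c'"
  proof (rule ccontr)
    assume "c \<noteq> c'"
    then have "precedes w c c' \<or> precedes w c' c"
      using precedes_total[OF distinct] block_ends_in_set cc by blast
    then show False
      using block_index_strict_mono[OF cc(1), of c c'] block_index_strict_mono[OF cc(2), of c' c] cc
      by auto
  qed
qed

lemma block_index_image: "block_index w ` block_ends w = {..<num_blocks}"
proof (rule card_subset_eq)
  show "block_index w ` block_ends w \<subseteq> {..<num_blocks}" using block_index_less by auto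
  show "card (block_index w ` block_ends w) = card {..<num_blocks}"
    using card_image[OF inj_on_block_index] unfolding num_blocks_def by simp
qed simp

lemma precedes_block_end_of_same_index:
  assumes "x \<in> set w" "c \<in> block_ends w" "block_index w x = block_index w c"
  shows "x = c \<or> precedes w x c"
proof (rule ccontr)
  assume "\<not> (x = c \<or> precedes w x c)"
  then have "precedes w c x" using precedes_total[OF distinct assms(1) block_ends_in_set[OF assms(2)]] by blast
  then show False using block_index_strict_mono[OF assms(2), of c x] assms(3) by simp
qed

lemma block_index_last: "block_index w (last w) = num_blocks - 1"
proof -
  have "{c \<in> block_ends w. precedes w c (last w)} = block_ends w - {last w}"
    using precedes_last block_ends_in_set precedes_irrefl[OF distinct] by auto
  then show ?thesis
    unfolding block_index_def num_blocks_def using last_in_block_ends finite_block_ends by simp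
qed

lemma block_end_between:
  assumes l: "l \<notin> rl_min_values w" and z: "z \<in> rl_min_values w" and lz: "precedes w l z"
  shows "\<exists>c \<in> block_ends w. precedes w l c \<and> (c = z \<or> precedes w c z)"
proof -
  obtain i k where ik: "i < k" "k < length w" "w ! i = l" "w ! k = z"
    using lz unfolding precedes_def by blast
  let ?P = "\<lambda>q. i < q \<and> q < length w \<and> w ! q \<in> rl_min_values w"
  define q where "q = (LEAST q. ?P q)"
  have "?P k" using ik z by simp
  then have q: "?P q" "q \<le> k" unfolding q_def by (rule LeastI, rule Least_le)
  have before_q: "w ! r \<notin> rl_min_values w" if "i \<le> r" "r < q" for r
    using not_less_Least[of r ?P] that q(1) l ik(3) unfolding q_def[symmetric]
    by (cases "r = i") auto
  have "i \<le> q - 1" "q - 1 < q" using q(1) by auto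
  then have "w ! (q - 1) \<notin> rl_min_values w" by (rule before_q)
  then have "w ! q \<in> block_ends w"
    unfolding block_ends_def block_end_pos_def using q(1) by auto
  moreover have "precedes w l (w ! q)"
    using precedes_nth_iff[OF distinct, of i q] ik q(1) by simp
  moreover have "w ! q = z \<or> precedes w (w ! q) z"
    using precedes_nth_iff[OF distinct q(1)[THEN conjunct2, THEN conjunct1] ik(2)] q(2) ik(4)
    by (cases "q = k") auto
  ultimately show ?thesis by blast
qed

lemma rl_min_after_non_rl_min_in_block:
  assumes l: "l \<in> set w" "l \<notin> rl_min_values w" and u: "u \<in> rl_min_values w"
    and lu: "precedes w l u" and same: "block_index w l = block_index w u"
  shows "u \<in> block_ends w" "u < l"
proof -
  have no_block_end_before: "c = u"
    if c: "c \<in> block_ends w" "precedes w l c" "c = z \<or> precedes w c z" and z: "z = u \<or> precedes w z u"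
    for c z
  proof (rule ccontr)
    assume "c \<noteq> u"
    then have "precedes w c u" using c(3) z precedes_trans[OF distinct, of c z u] by auto
    from block_index_strict_mono[OF c(1) disjI2[OF c(2)] this] show False using same by simp
  qed
  obtain c where "c \<in> block_ends w" "precedes w l c" "c = u \<or> precedes w c u"
    using block_end_between[OF l(2) u lu] by blast
  then show "u \<in> block_ends w" using no_block_end_before[of c u] by auto
  obtain z where z: "precedes w l z" "z < l"
    using not_rl_min_precedes_smaller[OF distinct l] by blast
  show "u < l"
  proof (cases "z \<in> rl_min_values w")
    case True
    have "z \<in> set w" "u \<in> set w" using precedes_in_set[OF z(1)] precedes_in_set[OF lu] by auto
    then consider "z = u" | "precedes w z u" | "precedes w u z"
      using precedes_total[OF distinct] by blast
    then show ?thesis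
    proof cases
      case 1
      then show ?thesis using z(2) by simp
    next
      case 2
      obtain c where "c \<in> block_ends w" "precedes w l c" "c = z \<or> precedes w c z"
        using block_end_between[OF l(2) True z(1)] by blast
      then have "u = z \<or> precedes w u z" using no_block_end_before[of c z] 2 by auto
      then show ?thesis using 2 precedes_irrefl[OF distinct] precedes_asym[OF distinct] by blast
    next
      case 3
      then show ?thesis using rl_min_precedes_less[OF distinct u] z(2) by fastforce
    qed
  next
    case False
    then have "l < z"
      using z(1) l(2) avoids unfolding avoids321_iff_non_rl_min_increasing[OF distinct] by blast
    then show ?thesis using z(2) by simp
  qed
qed

lemma ex_block_end_of_index: "j < num_blocks \<Longrightarrow> \<exists>c \<in> block_ends w. block_index w c = j"
  using block_index_image by (metis imageE lessThan_iff)

lemma bottom_entries_nonempty: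
  assumes j: "Suc j < num_blocks"
  shows "bottom_entries w j \<noteq> {}"
proof -
  obtain c where c: "c \<in> block_ends w" "block_index w c = j"
    using ex_block_end_of_index[of j] j by (meson Suc_lessD)
  obtain p where p: "block_end_pos w p" "c = w ! p" using c(1) unfolding block_ends_def by auto
  have "c \<noteq> last w" using c(2) block_index_last j by auto
  then have "p \<noteq> length w - 1" using p(2) nonempty by (auto simp: last_conv_nth)
  then have p_len: "p < length w" and p_pos: "0 < p" and z: "w ! (p - 1) \<notin> rl_min_values w"
    using p(1) unfolding block_end_pos_def by auto
  let ?z = "w ! (p - 1)"
  have "precedes w ?z c"
    using precedes_nth_iff[OF distinct, of "p - 1" p] p_len p_pos p(2) by simp
  then have "block_index w ?z \<le> j" using block_index_mono c(2) by fastforce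
  moreover have "j \<le> block_index w ?z"
  proof -
    have "{c' \<in> block_ends w. precedes w c' c} \<subseteq> {c' \<in> block_ends w. precedes w c' ?z}"
      using precedes_nth_pred[OF distinct p_pos p_len] p(2) z block_ends_rl_min by fastforce
    moreover have "finite {c' \<in> block_ends w. precedes w c' ?z}" using finite_block_ends by simp
    ultimately show ?thesis using c(2) unfolding block_index_def by (metis card_mono)
  qed
  ultimately have "?z \<in> bottom_entries w j"
    unfolding bottom_entries_def using z p_len by auto
  then show ?thesis by blast
qed

lemma precedes_of_block_index_less:
  "x \<in> set w \<Longrightarrow> y \<in> set w \<Longrightarrow> block_index w x < block_index w y \<Longrightarrow> precedes w x y"
  using precedes_total[OF distinct] block_index_mono by (metis leD less_irrefl)

lemma top_entry_less_bottom_entry: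
  assumes "j \<le> j'" "x \<in> top_entries w j" "y \<in> bottom_entries w j'"
  shows "x < y"
proof -
  have x: "x \<in> set w" "x \<in> rl_min_values w" "block_index w x = j"
    using assms(2) rl_min_values_subset unfolding top_entries_def by auto
  have y: "y \<in> set w" "y \<notin> rl_min_values w" "block_index w y = j'"
    using assms(3) unfolding bottom_entries_def by auto
  have "precedes w x y \<or> precedes w y x"
    using precedes_total[OF distinct x(1) y(1)] x(2) y(2) by blast
  then show ?thesis
  proof
    assume yx: "precedes w y x"
    then have "block_index w y = block_index w x"
      using block_index_mono x(3) y(3) assms(1) by fastforce
    then show ?thesis using rl_min_after_non_rl_min_in_block(2)[OF y(1,2) x(2) yx] by simp
  qed (use rl_min_precedes_less[OF distinct x(2)] in blast)
qed

lemma two_row_filling: "two_row_filling num_blocks (top_entries w) (bottom_entries w)"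
proof
  show "1 \<le> num_blocks" by (rule num_blocks_pos)
  show "finite (top_entries w j)" "finite (bottom_entries w j)" for j
    unfolding top_entries_def bottom_entries_def
    using rl_min_values_subset finite_subset by fastforce+
  show "top_entries w j \<noteq> {}" if "j < num_blocks" for j
    using ex_block_end_of_index[OF that] block_ends_rl_min unfolding top_entries_def by blast
  show "bottom_entries w j \<noteq> {}" if "Suc j < num_blocks" for j
    using bottom_entries_nonempty[OF that] .
  show "x < y" if "j < j'" "x \<in> top_entries w j" "y \<in> top_entries w j'" for j j' x y
    using that precedes_of_block_index_less[of x y] rl_min_precedes_less[OF distinct] rl_min_values_subset
    unfolding top_entries_def by blast
  show "x < y" if "j < j'" "x \<in> bottom_entries w j" "y \<in> bottom_entries w j'" for j j' x y
    using that precedes_of_block_index_less[of x y] avoids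
    unfolding bottom_entries_def avoids321_iff_non_rl_min_increasing[OF distinct] by auto
  show "x < y" if "j \<le> j'" "x \<in> top_entries w j" "y \<in> bottom_entries w j'" for j j' x y
    using top_entry_less_bottom_entry that by blast
  show "top_entries w j \<inter> bottom_entries w j' = {}" for j j'
    unfolding top_entries_def bottom_entries_def by auto
qed

sublocale blocks: two_row_filling num_blocks "top_entries w" "bottom_entries w"
  by (rule two_row_filling)

lemma top_max_block_end:
  assumes j: "j < num_blocks"
  shows "blocks.top_max j \<in> block_ends w" "block_index w (blocks.top_max j) = j"
proof -
  obtain c where c: "c \<in> block_ends w" "block_index w c = j" using ex_block_end_of_index[OF j] by blast
  have "x \<le> c" if "x \<in> top_entries w j" for x
  proof -
    have x: "x \<in> rl_min_values w" "block_index w x = j" using that unfolding top_entries_def by auto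
    then have "x \<in> set w" using rl_min_values_subset by blast
    then have "x = c \<or> precedes w x c"
      using precedes_block_end_of_same_index[OF _ c(1)] x(2) c(2) by simp
    then show ?thesis using rl_min_precedes_less[OF distinct x(1), of c] by auto
  qed
  moreover have "c \<in> top_entries w j" using c block_ends_rl_min unfolding top_entries_def by blast
  ultimately have "blocks.top_max j = c"
    unfolding blocks.top_max_def by (rule Max_eqI[OF blocks.finite_A])
  then show "blocks.top_max j \<in> block_ends w" "block_index w (blocks.top_max j) = j" using c by simp_all
qed

lemma set_blocks_word: "set blocks.word = set w"
  unfolding blocks.set_word
proof
  show "set w \<subseteq> (\<Union>j<num_blocks. top_entries w j \<union> bottom_entries w j)"
  proof
    fix x assume "x \<in> set w"
    then have "x \<in> top_entries w (block_index w x) \<union> bottom_entries w (block_index w x)"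
      unfolding top_entries_def bottom_entries_def by auto
    then show "x \<in> (\<Union>j<num_blocks. top_entries w j \<union> bottom_entries w j)"
      using block_index_less[of x] by blast
  qed
  show "(\<Union>j<num_blocks. top_entries w j \<union> bottom_entries w j) \<subseteq> set w"
    unfolding top_entries_def bottom_entries_def using rl_min_values_subset by auto
qed

lemma precedes_block_of_precedes:
  assumes xy: "precedes w x y" and j: "j < num_blocks"
    and x: "x \<in> top_entries w j \<union> bottom_entries w j" and y: "y \<in> top_entries w j \<union> bottom_entries w j"
  shows "precedes (blocks.block j) x y"
  unfolding blocks.precedes_block_iff[OF j]
proof -
  let ?c = "blocks.top_max j"
  have c: "?c \<in> block_ends w" "block_index w ?c = j" using top_max_block_end[OF j] by simp_all
  have index: "block_index w x = j" "block_index w y = j"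
    using x y unfolding top_entries_def bottom_entries_def by auto
  have "x \<noteq> ?c"
  proof
    assume "x = ?c"
    have "y = ?c \<or> precedes w y ?c"
      using precedes_block_end_of_same_index[OF _ c(1)] precedes_in_set[OF xy] index(2) c(2) by simp
    then show False using xy \<open>x = ?c\<close> precedes_irrefl[OF distinct] precedes_asym[OF distinct] by blast
  qed
  have "x \<in> top_entries w j \<Longrightarrow> y \<in> top_entries w j \<Longrightarrow> x < y"
    using rl_min_precedes_less[OF distinct _ xy] unfolding top_entries_def by blast
  moreover have "y = ?c" if "x \<in> bottom_entries w j" "y \<in> top_entries w j"
  proof -
    have "y \<in> block_ends w"
      using that rl_min_after_non_rl_min_in_block(1)[OF _ _ _ xy] index
      unfolding top_entries_def bottom_entries_def by auto
    then show ?thesis using inj_onD[OF inj_on_block_index _ \<open>y \<in> block_ends w\<close> c(1)] index(2) c(2) by simp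
  qed
  moreover have "x \<in> bottom_entries w j \<Longrightarrow> y \<in> bottom_entries w j \<Longrightarrow> x < y"
    using avoids xy unfolding bottom_entries_def avoids321_iff_non_rl_min_increasing[OF distinct] by blast
  ultimately show "(x \<in> top_entries w j - {?c} \<and> y \<in> top_entries w j - {?c} \<and> x < y) \<or>
    (x \<in> top_entries w j - {?c} \<and> y \<in> bottom_entries w j) \<or>
    (x \<in> (top_entries w j - {?c}) \<union> bottom_entries w j \<and> y = ?c) \<or>
    (x \<in> bottom_entries w j \<and> y \<in> bottom_entries w j \<and> x < y)"
    using x y \<open>x \<noteq> ?c\<close> by blast
qed

lemma blocks_word_eq: "blocks.word = w"
proof (rule sym, rule distinct_eq_if_precedes_imp[OF distinct blocks.word_distinct set_blocks_word[symmetric]])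
  fix x y assume xy: "precedes w x y"
  define j j' where "j = block_index w x" and "j' = block_index w y"
  have x: "x \<in> top_entries w j \<union> bottom_entries w j" and y: "y \<in> top_entries w j' \<union> bottom_entries w j'"
    using precedes_in_set[OF xy] unfolding top_entries_def bottom_entries_def j_def j'_def by auto
  have "j < num_blocks" "j' < num_blocks" unfolding j_def j'_def by (rule block_index_less)+
  note word_iff = blocks.precedes_word_iff[OF this x y]
  show "precedes blocks.word x y"
  proof (cases "j = j'")
    case True
    then show ?thesis using word_iff precedes_block_of_precedes[OF xy \<open>j < num_blocks\<close> x] y by simp
  next
    case False
    then have "j < j'" using block_index_mono[OF xy] unfolding j_def j'_def by simp
    then show ?thesis using word_iff by simp
  qed
qed

lemma tableau_of_word_eq:
  "tableau_of_word n w = (num_blocks, two_row_tableau n num_blocks (top_entries w) (bottom_entries w))"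
  unfolding tableau_of_word_def num_blocks_def Let_def ..

context
  fixes n :: nat
  assumes set_w: "set w = {1..n - 1}" and n_ge_2: "2 \<le> n"
begin

lemma entries: "(\<Union>j<num_blocks. top_entries w j \<union> bottom_entries w j) = {1..n - 1}"
  using set_blocks_word blocks.set_word set_w by simp

lemma tableau_of_word_in_SYT_two_rows: "tableau_of_word n w \<in> SYT_two_rows n"
  unfolding tableau_of_word_eq using blocks.two_row_tableau_in_SYT_two_rows[OF entries n_ge_2] .

lemma alpha_word_tableau_of_word: "(\<lambda>(b, T). alpha_word n b T) (tableau_of_word n w) = w"
  unfolding tableau_of_word_eq using blocks.alpha_word_two_row_tableau[OF entries n_ge_2] blocks_word_eq
  by simp

end

end

theorem theorem7:
  fixes n :: nat
  assumes "n \<ge> 2"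
  shows "bij_betw (\<lambda>(b, T). alpha_word n b T) (SYT_two_rows n) (perms321 (n - 1))
    \<and> (\<forall>(b, T) \<in> SYT_two_rows n. (\<Union>j<b. T 0 j) = rl_min_values (alpha_word n b T))
    \<and> (\<forall>(b, T) \<in> SYT_two_rows n. inner_valleys (alpha_word n b T) = b - 1)"
proof -
  have perm: "nonempty_321_avoiding w" "set w = {1..n - 1}" if "w \<in> perms321 (n - 1)" for w
    using that assms unfolding perms321_def nonempty_321_avoiding_def by auto
  have "bij_betw (\<lambda>(b, T). alpha_word n b T) (SYT_two_rows n) (perms321 (n - 1))"
  proof (rule bij_betw_byWitness[where f' = "tableau_of_word n"])
    show "\<forall>bT \<in> SYT_two_rows n. tableau_of_word n ((\<lambda>(b, T). alpha_word n b T) bT) = bT"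
      using two_row_SYT.tableau_of_alpha_word two_row_SYT.intro by fastforce
    show "\<forall>w \<in> perms321 (n - 1). (\<lambda>(b, T). alpha_word n b T) (tableau_of_word n w) = w"
      using nonempty_321_avoiding.alpha_word_tableau_of_word[OF perm assms] by blast
    show "(\<lambda>(b, T). alpha_word n b T) ` SYT_two_rows n \<subseteq> perms321 (n - 1)"
      using two_row_SYT.alpha_word_in_perms321 two_row_SYT.intro by fastforce
    show "tableau_of_word n ` perms321 (n - 1) \<subseteq> SYT_two_rows n"
      using nonempty_321_avoiding.tableau_of_word_in_SYT_two_rows[OF perm assms] by blast
  qed
  moreover have "\<forall>(b, T) \<in> SYT_two_rows n. (\<Union>j<b. T 0 j) = rl_min_values (alpha_word n b T)"
    using two_row_SYT.rl_min_values_alpha_word two_row_SYT.intro by fastforce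
  moreover have "\<forall>(b, T) \<in> SYT_two_rows n. inner_valleys (alpha_word n b T) = b - 1"
    using two_row_SYT.inner_valleys_alpha_word two_row_SYT.intro by fastforce
  ultimately show ?thesis by blast
qed

end
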